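(* Let $n$ be a positive integer and let $\Omega_1,\Omega_2$ be two distinct copies of $2^{[n]}$. For $i=1,2$ let $\bm{p}_i=(p_i^{(1)},\dots,p_i^{(n)})$ be a probability vector (i.e. $0<p_i^{(\ell)}<1$ for all $\ell$), write $p_i:=p_i^{(1)}$, and let $\mu_i$ be the product measure on $\Omega_i$ given by $$\mu_i(U)=\sum_{x\in U}\prod_{\ell\in x}p_i^{(\ell)}\prod_{k\in[n]\setminus x}(1-p_i^{(k)})\qquad (U\subset\Omega_i).$$ Assume that $p_1p_2=\max\{p_1^{(\ell)}p_2^{(\ell)}:\ell\in[n]\}$ and that $p_1^{(\ell)},p_2^{(\ell)}\leqslant 1/3$ for all $\ell\in[n]$. If $U_1\subset\Omega_1$ and $U_2\subset\Omega_2$ are cross-intersecting (i.e. $x\cap y\neq\emptyset$ for all $x\in U_1$, $y\in U_2$), then $\mu_1(U_1)\mu_2(U_2)\leqslant p_1p_2$. Moreover, with $w:=\{\ell\in[n]:p_1^{(\ell)}p_2^{(\ell)}=p_1p_2\}$ and $U_i^{(\ell)}:=\{x\in\Omega_i:\ell\in x\}$, equality holds if and only if $U_1=U_1^{(\ell)}$ and $U_2=U_2^{(\ell)}$ for some $\ell\in w$.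
   Context: A probability vector is a vector $\bm{p}=(p^{(1)},\dots,p^{(n)})$ with $0<p^{(\ell)}<1$ for every $\ell$. *)

theory Defs
  imports Complex_Main
begin

definition prob_vec :: "nat \<Rightarrow> (nat \<Rightarrow> real) \<Rightarrow> bool" where
  "prob_vec n p \<longleftrightarrow> (\<forall>l\<in>{1..n}. 0 < p l \<and> p l < 1)"

definition prod_measure :: "nat \<Rightarrow> (nat \<Rightarrow> real) \<Rightarrow> nat set set \<Rightarrow> real" where
  "prod_measure n p U = (\<Sum>x\<in>U. (\<Prod>l\<in>x. p l) * (\<Prod>k\<in>{1..n} - x. (1 - p k)))"

definition cross_intersecting :: "'a set set \<Rightarrow> 'a set set \<Rightarrow> bool" where
  "cross_intersecting U V \<longleftrightarrow> (\<forall>x\<in>U. \<forall>y\<in>V. x \<inter> y \<noteq> {})"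

definition star :: "nat \<Rightarrow> nat \<Rightarrow> nat set set" where
  "star n l = {x. x \<subseteq> {1..n} \<and> l \<in> x}"

end

theory Submission
  imports Defs
begin

(*
  Splitting a family at a point j into its deletion and
  its link writes its measure as a = (1 - p1 j) a0 + p1 j a1, and a cross-intersecting
  pair (A, B) yields three cross-intersecting pairs of sections (deletion/deletion,
  deletion/link, link/deletion); nothing is known about the link/link pair.  The bound
  a b <= P does not survive this step on its own, so it is carried together with the
  hyperbola bound a b <= S (1 - a) (1 - b), S = 9P/4.  Both bounds for (a, b) follow from
  those for the three controlled pairs by elementary real inequalities.  The delicate
  case is a1 b1 > P with (a1, b1) near (1, 1): there the hyperbola bounds on (a0, b1)
  and (a1, b0) force a0 and b0 to be small, and p <= 1/3 is used.  Following equality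
  through the induction leaves only the stars.
*)

section \<open>The numerical induction step\<close>

(* The coefficients are S/P and (S/P)^2 for S = 9P/4; the margin (u + v)/40 is what
   forces a1 = b1 = 1 in the equality case. *)
lemma near_corner_polynomial_ineq:
  fixes q1 q2 u v :: real
  assumes q1: "0 < q1" "q1 \<le> 1/3" and q2: "0 < q2" "q2 \<le> 1/3"
    and u: "0 \<le> u" "u \<le> q1 + q2 - q1*q2" and v: "0 \<le> v" "v \<le> q1 + q2 - q1*q2"
  shows "(9/4)*(q1*(1-q2)*u + q2*(1-q1)*v) + (81/16)*q1*q2*u*v + (u+v)/40 \<le> u + v - u*v"
proof -
  define \<alpha> where "\<alpha> = 1 - (9/4)*(q1*(1-q2))"
  define \<beta> where "\<beta> = 1 - (9/4)*(q2*(1-q1))"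
  define \<gamma> where "\<gamma> = 1 + (81/16)*q1*q2"
  define c where "c = q1 + q2 - q1*q2"
  define m where "m = min u v"
  define s where "s = \<alpha>*u + \<beta>*v"
  have "q1*(1-q2) \<le> q1" "q2*(1-q1) \<le> q2" using q1 q2 by (simp_all add: mult_left_le)
  then have \<alpha>: "\<alpha> \<ge> 1/4" and \<beta>: "\<beta> \<ge> 1/4" using q1 q2 unfolding \<alpha>_def \<beta>_def by linarith+
  have "(1/3)*(1/3) \<le> (1-2*q1)*(1-2*q2)" using q1 q2 by (intro mult_mono) auto
  then have \<alpha>\<beta>: "\<alpha> + \<beta> \<ge> 1" unfolding \<alpha>_def \<beta>_def by (simp add: field_simps)
  have "q1*q2 \<le> (1/3)*(1/3)" using q1 q2 by (intro mult_mono) auto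
  then have \<gamma>: "0 \<le> \<gamma>" "\<gamma> \<le> 25/16" using q1 q2 by (simp_all add: \<gamma>_def)
  have "(2/3)*(2/3) \<le> (1-q1)*(1-q2)" using q1 q2 by (intro mult_mono) auto
  then have c: "0 \<le> c" "c \<le> 5/9" using u by (simp_all add: c_def algebra_simps)
  have "\<gamma>*c \<le> 125/144"
    using mult_mono[OF \<gamma>(2) c(2) _ c(1)] by simp
  with \<alpha>\<beta> have \<gamma>c: "\<gamma>*c \<le> (125/144)*(\<alpha>+\<beta>)" by simp
  have m: "0 \<le> m" "m \<le> u" "m \<le> v" using u v by (simp_all add: m_def)
  have "u*v \<le> u*c" "u*v \<le> c*v"
    using mult_left_mono[OF v(2) u(1)] mult_right_mono[OF u(2) v(1)] by (simp_all add: c_def)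
  then have "u*v \<le> c*m" by (simp add: m_def min_def mult.commute)
  then have "\<gamma>*(u*v) \<le> \<gamma>*c*m" using \<gamma> by (simp add: mult_left_mono mult.assoc)
  also have "\<dots> \<le> (125/144)*(\<alpha>+\<beta>)*m"
    using \<gamma>c m(1) by (rule mult_right_mono)
  also have "\<dots> \<le> (125/144)*s"
    using m \<alpha> \<beta> by (simp add: s_def distrib_right add_mono mult_left_mono)
  finally have "\<gamma>*(u*v) \<le> (125/144)*s" .
  moreover have "(u+v)/40 \<le> (19/144)*s"
    using mult_right_mono[OF \<alpha> u(1)] mult_right_mono[OF \<beta> v(1)] u(1) v(1) by (simp add: s_def distrib_left)
  ultimately have "\<gamma>*(u*v) + (u+v)/40 \<le> s" by linarith
  then show ?thesis by (simp add: s_def \<alpha>_def \<beta>_def \<gamma>_def field_simps)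
qed

lemma mix_between_min_max:
  fixes q x y :: real
  assumes "0 \<le> q" "q \<le> 1"
  shows "min x y \<le> (1-q)*x + q*y" and "(1-q)*x + q*y \<le> max x y"
proof -
  have "(1-q)*min x y + q*min x y \<le> (1-q)*x + q*y"
    and "(1-q)*x + q*y \<le> (1-q)*max x y + q*max x y"
    using assms by (intro add_mono mult_left_mono; simp)+
  then show "min x y \<le> (1-q)*x + q*y" and "(1-q)*x + q*y \<le> max x y"
    by (simp_all add: algebra_simps)
qed

lemma mix_eq_max_imp_eq:
  fixes q x y :: real
  assumes "0 < q" "q < 1" and "(1-q)*x + q*y = max x y"
  shows "x = y"
proof (cases "x \<le> y")
  case True
  then have "(1-q)*(y-x) = 0" using assms(3) by (simp add: max_def algebra_simps)
  then show ?thesis using assms(2) by simp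
next
  case False
  then have "q*(x-y) = 0" using assms(3) by (simp add: max_def algebra_simps)
  then show ?thesis using assms(1) by simp
qed

lemma mix_product_times_corner_le:
  fixes q1 q2 a0 a1 b0 b1 X Y :: real
  defines "a \<equiv> (1-q1)*a0 + q1*a1" and "b \<equiv> (1-q2)*b0 + q2*b1"
  assumes q1: "0 \<le> q1" "q1 \<le> 1" and q2: "0 \<le> q2" "q2 \<le> 1"
    and nonneg: "0 \<le> a0" "0 \<le> a1" "0 \<le> b0" "0 \<le> b1"
    and X: "a0*b1 \<le> X" and Y: "a1*b0 \<le> Y"
  shows "a*b*(a1*b1) \<le> ((1-q1)*X + q1*(a1*b1))*((1-q2)*Y + q2*(a1*b1))"
proof -
  have "a*b*(a1*b1) = ((1-q1)*(a0*b1) + q1*(a1*b1))*((1-q2)*(a1*b0) + q2*(a1*b1))"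
    by (simp add: a_def b_def algebra_simps)
  also have "\<dots> \<le> ((1-q1)*X + q1*(a1*b1))*((1-q2)*Y + q2*(a1*b1))"
  proof (rule mult_mono)
    show "(1-q1)*(a0*b1) + q1*(a1*b1) \<le> (1-q1)*X + q1*(a1*b1)" using X q1 by (simp add: mult_left_mono)
    show "(1-q2)*(a1*b0) + q2*(a1*b1) \<le> (1-q2)*Y + q2*(a1*b1)" using Y q2 by (simp add: mult_left_mono)
    show "0 \<le> (1-q2)*(a1*b0) + q2*(a1*b1)" using q2 nonneg by simp
    have "0 \<le> X" using X mult_nonneg_nonneg[OF nonneg(1,4)] by linarith
    then show "0 \<le> (1-q1)*X + q1*(a1*b1)" using q1 nonneg by simp
  qed
  finally show ?thesis .
qed

lemma mix_product_le_dominated: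
  fixes q1 q2 P a0 a1 b0 b1 :: real
  defines "a \<equiv> (1-q1)*a0 + q1*a1" and "b \<equiv> (1-q2)*b0 + q2*b1"
  assumes q1: "0 < q1" "q1 < 1" and q2: "0 < q2" "q2 < 1"
    and nonneg: "0 \<le> a0" "0 \<le> a1" "0 \<le> b0" "0 \<le> b1"
    and dominated: "max a0 a1 * max b0 b1 \<le> P"
  shows "a*b \<le> P" and "a*b = P \<Longrightarrow> 0 < P \<Longrightarrow> a0 = a1 \<and> b0 = b1"
proof -
  have ab: "0 \<le> a" "a \<le> max a0 a1" "0 \<le> b" "b \<le> max b0 b1"
    using nonneg mix_between_min_max[of q1 a0 a1] mix_between_min_max[of q2 b0 b1] q1 q2
    by (simp_all add: a_def b_def)
  have le1: "a*b \<le> max a0 a1 * b" and le2: "max a0 a1 * b \<le> max a0 a1 * max b0 b1"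
    using ab by (simp_all add: mult_right_mono mult_left_mono)
  with dominated show "a*b \<le> P" by linarith
  assume eq: "a*b = P" and P: "0 < P"
  have tight: "a*b = max a0 a1 * b" "max a0 a1 * b = max a0 a1 * max b0 b1"
    using eq le1 le2 dominated by linarith+
  have "a \<noteq> 0" "b \<noteq> 0" using eq P by auto
  then have "0 < b" "0 < max a0 a1" using ab by linarith+
  then have "a = max a0 a1" "b = max b0 b1" using tight by simp_all
  then show "a0 = a1 \<and> b0 = b1"
    using mix_eq_max_imp_eq[OF q1, of a0 a1] mix_eq_max_imp_eq[OF q2, of b0 b1] by (simp add: a_def b_def)
qed

lemma mix_product_lt_far_from_corner:
  fixes q1 q2 P a0 a1 b0 b1 :: real
  defines "a \<equiv> (1-q1)*a0 + q1*a1" and "b \<equiv> (1-q2)*b0 + q2*b1"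
  assumes q1: "0 \<le> q1" "q1 \<le> 1" and q2: "0 \<le> q2" "q2 \<le> 1"
    and nonneg: "0 \<le> a0" "0 \<le> a1" "0 \<le> b0" "0 \<le> b1"
    and P01: "a0*b1 \<le> P" and P10: "a1*b0 \<le> P" and P11: "P < a1*b1"
    and far: "q1*q2*(a1*b1) < (1-q1)*(1-q2)*P"
  shows "a*b < P"
proof -
  define t where "t = a1*b1"
  have P: "0 \<le> P" using P01 mult_nonneg_nonneg[OF nonneg(1,4)] by linarith
  then have t: "0 < t" using P11 by (simp add: t_def)
  have "a*b*t \<le> ((1-q1)*P + q1*t)*((1-q2)*P + q2*t)"
    using mix_product_times_corner_le[of q1 q2 a0 a1 b0 b1 P P] q1 q2 nonneg P01 P10
    by (simp add: a_def b_def t_def)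
  also have "\<dots> = P*t - ((1-q1)*(1-q2)*P - q1*q2*t)*(t - P)" by (simp add: algebra_simps)
  also have "\<dots> < P*t" using far P11 by (simp add: t_def)
  finally show ?thesis using t by (simp add: mult.commute)
qed

(* The corner hypothesis gives a1 b1 >= (1 - q1) (1 - q2), i.e. 1 - a1, 1 - b1 <= q1 + q2 - q1 q2,
   and it absorbs the term quadratic in S. *)
lemma mix_product_le_near_corner:
  fixes q1 q2 P S a0 a1 b0 b1 :: real
  defines "a \<equiv> (1-q1)*a0 + q1*a1" and "b \<equiv> (1-q2)*b0 + q2*b1"
  assumes q1: "0 < q1" "q1 \<le> 1/3" and q2: "0 < q2" "q2 \<le> 1/3"
    and qP: "q1*q2 \<le> P" and S: "0 \<le> S" "S \<le> 9*P/4"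
    and a: "0 \<le> a0" "a0 \<le> 1" "0 \<le> a1" "a1 \<le> 1"
    and b: "0 \<le> b0" "b0 \<le> 1" "0 \<le> b1" "b1 \<le> 1"
    and H01: "a0*b1 \<le> S*(1-a0)*(1-b1)" and H10: "a1*b0 \<le> S*(1-a1)*(1-b0)"
    and corner: "(1-q1)*(1-q2)*P \<le> q1*q2*(a1*b1)"
  shows "a*b \<le> P - (P - q1*q2)*(a1*b1) - P*((1-a1) + (1-b1))/40"
proof -
  define t where "t = a1*b1"
  define u where "u = 1 - a1"
  define v where "v = 1 - b1"
  define L where "L = q1*(1-q2)*u + q2*(1-q1)*v"
  have qq: "0 < q1*q2" "0 < (1-q1)*(1-q2)" using q1 q2 by simp_all
  then have P: "0 < P" using qP by linarith
  have "q1*q2*((1-q1)*(1-q2)) \<le> q1*q2*t"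
    using mult_left_mono[OF qP less_imp_le[OF qq(2)]] corner by (simp add: t_def algebra_simps)
  then have t_ge: "(1-q1)*(1-q2) \<le> t" using mult_le_cancel_left_pos[OF qq(1)] by blast
  then have t: "0 < t" "t \<le> a1" "t \<le> b1"
    using qq(2) a b by (simp_all add: t_def mult_left_le mult_left_le_one_le)
  have uv: "0 \<le> u" "u \<le> q1 + q2 - q1*q2" "0 \<le> v" "v \<le> q1 + q2 - q1*q2"
    using a b t t_ge by (simp_all add: u_def v_def algebra_simps)
  have "(1-a0)*(S*v) \<le> S*v" "(1-b0)*(S*u) \<le> S*u"
    using S a b by (intro mult_left_le_one_le; simp add: u_def v_def)+
  then have A: "a0*b1 \<le> S*v" and B: "a1*b0 \<le> S*u"
    using H01 H10 by (simp_all add: u_def v_def algebra_simps)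
  have "a*b*t \<le> ((1-q1)*(S*v) + q1*t)*((1-q2)*(S*u) + q2*t)"
    using mix_product_times_corner_le[of q1 q2 a0 a1 b0 b1 "S*v" "S*u"] q1 q2 a b A B
    by (simp add: a_def b_def t_def)
  also have "\<dots> = t*(q1*q2*t + S*L) + (1-q1)*(1-q2)*(S*S)*(u*v)"
    by (simp add: L_def algebra_simps)
  also have "\<dots> \<le> t*(q1*q2*t + S*L + (81/16)*P*(q1*q2*(u*v)))"
  proof -
    have "S*S \<le> (9*P/4)*(9*P/4)" using S by (intro mult_mono) auto
    then have "(1-q1)*(1-q2)*(S*S)*(u*v) \<le> (1-q1)*(1-q2)*((9*P/4)*(9*P/4))*(u*v)"
      using qq uv by (intro mult_right_mono mult_left_mono) auto
    also have "\<dots> = (81/16)*P*(u*v)*((1-q1)*(1-q2)*P)" by (simp add: algebra_simps)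
    also have "\<dots> \<le> (81/16)*P*(u*v)*(q1*q2*t)"
      using corner P uv by (intro mult_left_mono) (auto simp: t_def)
    finally show ?thesis by (simp add: algebra_simps)
  qed
  also have "\<dots> \<le> t*(P - (P - q1*q2)*t - P*(u+v)/40)"
  proof (rule mult_left_mono)
    have "S*L \<le> (9*P/4)*L" using S uv q1 q2 by (intro mult_right_mono) (auto simp: L_def)
    moreover have "P*((9/4)*L + (81/16)*q1*q2*u*v + (u+v)/40) \<le> P*(u + v - u*v)"
      using near_corner_polynomial_ineq[OF q1 q2 uv] P by (simp add: L_def)
    moreover have "u + v - u*v = 1 - t" by (simp add: u_def v_def t_def algebra_simps)
    ultimately show "q1*q2*t + S*L + (81/16)*P*(q1*q2*(u*v)) \<le> P - (P - q1*q2)*t - P*(u+v)/40"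
      by (simp add: algebra_simps)
  qed (use t in simp)
  finally show ?thesis using t by (simp add: t_def u_def v_def mult.commute)
qed

lemma mix_product_le:
  fixes q1 q2 P S a0 a1 b0 b1 :: real
  defines "a \<equiv> (1-q1)*a0 + q1*a1" and "b \<equiv> (1-q2)*b0 + q2*b1"
  assumes q1: "0 < q1" "q1 \<le> 1/3" and q2: "0 < q2" "q2 \<le> 1/3"
    and qP: "q1*q2 \<le> P" and S: "0 \<le> S" "S \<le> 9*P/4"
    and a: "0 \<le> a0" "a0 \<le> 1" "0 \<le> a1" "a1 \<le> 1"
    and b: "0 \<le> b0" "b0 \<le> 1" "0 \<le> b1" "b1 \<le> 1"
    and P00: "a0*b0 \<le> P" and P01: "a0*b1 \<le> P" and P10: "a1*b0 \<le> P"
    and H01: "a0*b1 \<le> S*(1-a0)*(1-b1)" and H10: "a1*b0 \<le> S*(1-a1)*(1-b0)"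
  shows "a*b \<le> P"
    and "a*b = P \<Longrightarrow> (a0 = a1 \<and> b0 = b1) \<or> (a0 = 0 \<and> b0 = 0 \<and> a1 = 1 \<and> b1 = 1 \<and> q1*q2 = P)"
proof -
  have P: "0 < P" using qP mult_pos_pos[OF q1(1) q2(1)] by linarith
  have q1': "0 < q1" "q1 < 1" and q2': "0 < q2" "q2 < 1" using q1 q2 by simp_all
  have "max a0 a1 * max b0 b1 \<le> P \<or> P < a1*b1"
    using P00 P01 P10 by (auto simp: max_def)
  then consider (dominated) "max a0 a1 * max b0 b1 \<le> P"
    | (far) "P < a1*b1" "q1*q2*(a1*b1) < (1-q1)*(1-q2)*P"
    | (near) "(1-q1)*(1-q2)*P \<le> q1*q2*(a1*b1)"
    by linarith
  then have "a*b \<le> P \<and> (a*b = P \<longrightarrow> (a0 = a1 \<and> b0 = b1) \<or> (a0 = 0 \<and> b0 = 0 \<and> a1 = 1 \<and> b1 = 1 \<and> q1*q2 = P))"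
  proof cases
    case dominated
    then show ?thesis
      using mix_product_le_dominated[OF q1' q2' a(1,3) b(1,3)] P by (simp add: a_def b_def)
  next
    case far
    then show ?thesis
      using mix_product_lt_far_from_corner[of q1 q2 a0 a1 b0 b1 P] q1' q2' a b P01 P10
      by (simp add: a_def b_def)
  next
    case near
    have bound: "a*b \<le> P - (P - q1*q2)*(a1*b1) - P*((1-a1) + (1-b1))/40"
      using mix_product_le_near_corner[OF q1 q2 qP S a b H01 H10 near] by (simp add: a_def b_def)
    have slack: "0 \<le> (P - q1*q2)*(a1*b1)" "0 \<le> P*((1-a1) + (1-b1))/40"
      using qP P a b by simp_all
    show ?thesis
    proof (intro conjI impI)
      show "a*b \<le> P" using bound slack by linarith
      assume "a*b = P"
      then have "(P - q1*q2)*(a1*b1) = 0" "P*((1-a1) + (1-b1))/40 = 0"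
        using bound slack by linarith+
      then have corner: "a1 = 1" "b1 = 1" "q1*q2 = P" using P a b by auto
      then have "a0 = 0" "b0 = 0" using H01 H10 a b by (auto simp: mult_le_0_iff)
      with corner show "(a0 = a1 \<and> b0 = b1) \<or> (a0 = 0 \<and> b0 = 0 \<and> a1 = 1 \<and> b1 = 1 \<and> q1*q2 = P)"
        by simp
    qed
  qed
  then show "a*b \<le> P"
    and "a*b = P \<Longrightarrow> (a0 = a1 \<and> b0 = b1) \<or> (a0 = 0 \<and> b0 = 0 \<and> a1 = 1 \<and> b1 = 1 \<and> q1*q2 = P)"
    by simp_all
qed

lemma below_hyperbola_iff:
  fixes S a b :: real
  shows "a*b \<le> S*(1-a)*(1-b) \<longleftrightarrow> b*(a + S*(1-a)) \<le> S*(1-a)"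
  by (simp add: algebra_simps)

lemma mult_le_hyperbola_of_le_third:
  fixes q1 q2 P :: real
  assumes "0 \<le> q1" "q1 \<le> 1/3" "0 \<le> q2" "q2 \<le> 1/3" and "q1*q2 \<le> P"
  shows "q1*q2 \<le> 9*P/4 * (1 - q1) * (1 - q2)"
proof -
  have "(2/3)*(2/3) \<le> (1 - q1)*(1 - q2)" using assms by (intro mult_mono) auto
  moreover have "0 \<le> P" using assms mult_nonneg_nonneg[of q1 q2] by linarith
  ultimately have "9*P/4 * ((2/3)*(2/3)) \<le> 9*P/4 * ((1 - q1)*(1 - q2))" by (intro mult_left_mono) auto
  then show ?thesis using assms(5) by (simp add: mult.assoc)
qed

(* In the form b (a + S (1 - a)) <= S (1 - a), the case a0 <= a1 becomes, after clearing
   the denominators u and v, a factorisation whose sign is given by qS; otherwise a <= a0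
   and the bounds for (a0, b0) and (a0, b1) suffice. *)
lemma mix_below_hyperbola:
  fixes q1 q2 S a0 a1 b0 b1 :: real
  defines "a \<equiv> (1-q1)*a0 + q1*a1" and "b \<equiv> (1-q2)*b0 + q2*b1"
  assumes q1: "0 \<le> q1" "q1 \<le> 1" and q2: "0 \<le> q2" "q2 \<le> 1"
    and S: "0 < S" "S < 1" and qS: "q1*q2 \<le> S*(1-q1)*(1-q2)"
    and a: "0 \<le> a0" "a0 \<le> 1" "0 \<le> a1" "a1 \<le> 1"
    and b: "0 \<le> b0" "b0 \<le> 1" "0 \<le> b1" "b1 \<le> 1"
    and H00: "a0*b0 \<le> S*(1-a0)*(1-b0)" and H01: "a0*b1 \<le> S*(1-a0)*(1-b1)"
    and H10: "a1*b0 \<le> S*(1-a1)*(1-b0)"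
  shows "a*b \<le> S*(1-a)*(1-b)"
proof (cases "a0 \<le> a1")
  case True
  define u where "u = a0 + S*(1-a0)"
  define v where "v = a1 + S*(1-a1)"
  have uv: "S \<le> u" "u \<le> v" "v \<le> 1"
    using S a mult_left_mono[OF True, of "1-S"] mult_left_le_one_le[of a0 S] mult_left_le_one_le[of "1-a1" S]
    by (simp_all add: u_def v_def algebra_simps)
  have Da: "a + S*(1-a) = (1-q1)*u + q1*v" by (simp add: a_def u_def v_def algebra_simps)
  then have Da0: "0 \<le> a + S*(1-a)" using q1 uv S by simp
  have hb0: "b0*v \<le> S*(1-a1)" and hb1: "b1*u \<le> S*(1-a0)"
    using H10 H01 by (simp_all add: below_hyperbola_iff u_def v_def)
  have "b*(a + S*(1-a))*(u*v) = (1-q2)*(b0*v)*((a + S*(1-a))*u) + q2*(b1*u)*((a + S*(1-a))*v)"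
    by (simp add: b_def algebra_simps)
  also have "\<dots> \<le> (1-q2)*(S*(1-a1))*((a + S*(1-a))*u) + q2*(S*(1-a0))*((a + S*(1-a))*v)"
    using hb0 hb1 q2 Da0 uv S by (intro add_mono mult_right_mono mult_left_mono) auto
  also have "\<dots> \<le> S*(1-a)*(u*v)"
  proof -
    have "(1-S)*(S*(1-a)*(u*v) - ((1-q2)*(S*(1-a1))*((a + S*(1-a))*u) + q2*(S*(1-a0))*((a + S*(1-a))*v)))
        = S*(v-u)*((1-q1)*(1-q2)*u - q1*q2*v)" (is "(1-S)*?D = _")
      by (simp add: a_def u_def v_def algebra_simps)
    moreover have "q1*q2*v \<le> (1-q1)*(1-q2)*u"
    proof -
      have "q1*q2*v \<le> q1*q2" using uv(3) q1 q2 by (simp add: mult_left_le)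
      also have "\<dots> \<le> (1-q1)*(1-q2)*S" using qS by (simp add: mult.commute mult.left_commute)
      also have "\<dots> \<le> (1-q1)*(1-q2)*u" using uv(1) q1 q2 by (simp add: mult_left_mono)
      finally show ?thesis .
    qed
    ultimately have "0 \<le> (1-S)*?D" using S uv by simp
    then show ?thesis using S by (simp add: zero_le_mult_iff)
  qed
  finally have "b*(a + S*(1-a)) \<le> S*(1-a)" using S uv by simp
  then show ?thesis by (simp add: below_hyperbola_iff)
next
  case False
  have "b*(a0 + S*(1-a0)) = (1-q2)*(b0*(a0 + S*(1-a0))) + q2*(b1*(a0 + S*(1-a0)))"
    by (simp add: b_def algebra_simps)
  also have "\<dots> \<le> (1-q2)*(S*(1-a0)) + q2*(S*(1-a0))"
    using H00 H01 q2 by (intro add_mono mult_left_mono) (simp_all add: below_hyperbola_iff)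
  finally have H0: "a0*b \<le> S*(1-a0)*(1-b)" by (simp add: below_hyperbola_iff algebra_simps)
  have ab: "0 \<le> a" "a \<le> a0" "0 \<le> b" "b \<le> 1"
    using False a b mix_between_min_max[OF q1, of a0 a1] mix_between_min_max[OF q2, of b0 b1]
    by (simp_all add: a_def b_def)
  have "a*b \<le> a0*b" using ab by (simp add: mult_right_mono)
  also have "\<dots> \<le> S*(1-a0)*(1-b)" by (rule H0)
  also have "\<dots> \<le> S*(1-a)*(1-b)" using ab S by (intro mult_right_mono mult_left_mono) auto
  finally show ?thesis .
qed

section \<open>Product measures on the cube\<close>

definition cube_weight :: "'a set \<Rightarrow> ('a \<Rightarrow> real) \<Rightarrow> 'a set \<Rightarrow> real" where
  "cube_weight G p x = (\<Prod>l\<in>x. p l) * (\<Prod>k\<in>G - x. 1 - p k)"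

definition cube_measure :: "'a set \<Rightarrow> ('a \<Rightarrow> real) \<Rightarrow> 'a set set \<Rightarrow> real" where
  "cube_measure G p A = (\<Sum>x\<in>A. cube_weight G p x)"

lemma cube_weight_pos:
  assumes "finite G" and "\<forall>l\<in>G. 0 < p l \<and> p l < 1" and "x \<subseteq> G"
  shows "0 < cube_weight G p x"
  using assms unfolding cube_weight_def by (intro mult_pos_pos prod_pos) auto

lemma cube_measure_nonneg:
  assumes "finite G" and "\<forall>l\<in>G. 0 < p l \<and> p l < 1" and "A \<subseteq> Pow G"
  shows "0 \<le> cube_measure G p A"
  unfolding cube_measure_def using assms by (auto intro!: sum_nonneg less_imp_le[OF cube_weight_pos])

lemma cube_measure_Pow:
  assumes "finite G"
  shows "cube_measure G p (Pow G) = 1"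
  using prod_add[OF assms, of p "\<lambda>k. 1 - p k"] by (simp add: cube_measure_def cube_weight_def)

lemma cube_measure_complement:
  assumes "finite G" and "A \<subseteq> Pow G"
  shows "cube_measure G p A + cube_measure G p (Pow G - A) = 1"
  using sum.subset_diff[of A "Pow G" "cube_weight G p"] cube_measure_Pow[of G p] assms
  by (simp add: cube_measure_def)

lemma cube_measure_le_one:
  assumes "finite G" and "\<forall>l\<in>G. 0 < p l \<and> p l < 1" and "A \<subseteq> Pow G"
  shows "cube_measure G p A \<le> 1"
  using cube_measure_complement[OF assms(1,3), of p] cube_measure_nonneg[OF assms(1,2), of "Pow G - A"]
  by simp

lemma cube_measure_eq_0_iff:
  assumes "finite G" and "\<forall>l\<in>G. 0 < p l \<and> p l < 1" and "A \<subseteq> Pow G"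
  shows "cube_measure G p A = 0 \<longleftrightarrow> A = {}"
proof -
  have "finite A" using assms by (meson finite_Pow_iff finite_subset)
  moreover have "\<forall>x\<in>A. 0 < cube_weight G p x" using assms by (auto intro: cube_weight_pos)
  ultimately show ?thesis unfolding cube_measure_def by (auto simp: sum_nonneg_eq_0_iff less_eq_real_def)
qed

lemma cube_measure_eq_1_iff:
  assumes "finite G" and "\<forall>l\<in>G. 0 < p l \<and> p l < 1" and "A \<subseteq> Pow G"
  shows "cube_measure G p A = 1 \<longleftrightarrow> A = Pow G"
  using cube_measure_complement[OF assms(1,3), of p] cube_measure_eq_0_iff[OF assms(1,2), of "Pow G - A"]
    cube_measure_Pow[OF assms(1), of p] assms(3)
  by auto

section \<open>Deletion and link of a family\<close>

definition deletion :: "'a \<Rightarrow> 'a set set \<Rightarrow> 'a set set" where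
  "deletion j A = {x\<in>A. j \<notin> x}"

definition link :: "'a \<Rightarrow> 'a set set \<Rightarrow> 'a set set" where
  "link j A = {y. j \<notin> y \<and> insert j y \<in> A}"

definition star_on :: "'a set \<Rightarrow> 'a \<Rightarrow> 'a set set" where
  "star_on G l = {x. x \<subseteq> G \<and> l \<in> x}"

lemma mem_iff_sections: "x \<in> A \<longleftrightarrow> (if j \<in> x then x - {j} \<in> link j A else x \<in> deletion j A)"
  by (auto simp: link_def deletion_def insert_absorb)

lemma sections_eq_imp_eq:
  assumes "deletion j A = deletion j B" and "link j A = link j B"
  shows "A = B"
proof (rule set_eqI)
  fix x
  show "x \<in> A \<longleftrightarrow> x \<in> B" using mem_iff_sections[of x A j] mem_iff_sections[of x B j] assms by simp
qed

lemma sections_subset_Pow: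
  assumes "A \<subseteq> Pow (insert j G)" and "j \<notin> G"
  shows "deletion j A \<subseteq> Pow G" and "link j A \<subseteq> Pow G"
  using assms by (auto simp: deletion_def link_def)

lemma image_insert_link: "insert j ` link j A = {x\<in>A. j \<in> x}"
proof (intro equalityI subsetI)
  fix x assume x: "x \<in> {x\<in>A. j \<in> x}"
  then have "x - {j} \<in> link j A" by (simp add: link_def insert_absorb)
  moreover have "x = insert j (x - {j})" using x by auto
  ultimately show "x \<in> insert j ` link j A" by blast
qed (auto simp: link_def)

lemma cube_weight_insert:
  assumes "finite G" and "j \<notin> G" and "x \<subseteq> G"
  shows "cube_weight (insert j G) p x = (1 - p j) * cube_weight G p x"
    and "cube_weight (insert j G) p (insert j x) = p j * cube_weight G p x"
proof -
  have "finite x" "j \<notin> x" using assms finite_subset by blast+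
  moreover have "insert j G - x = insert j (G - x)" "insert j G - insert j x = G - x"
    using assms by auto
  ultimately show "cube_weight (insert j G) p x = (1 - p j) * cube_weight G p x"
    and "cube_weight (insert j G) p (insert j x) = p j * cube_weight G p x"
    using assms by (simp_all add: cube_weight_def)
qed

lemma cube_measure_insert:
  assumes "finite G" and "j \<notin> G" and "A \<subseteq> Pow (insert j G)"
  shows "cube_measure (insert j G) p A
    = (1 - p j) * cube_measure G p (deletion j A) + p j * cube_measure G p (link j A)"
proof -
  let ?w = "cube_weight (insert j G) p"
  have fin: "finite (deletion j A)" "finite (link j A)"
    using sections_subset_Pow[OF assms(3,2)] assms(1) by (auto intro: finite_subset[of _ "Pow G"])
  have inj: "inj_on (insert j) (link j A)" by (auto simp: inj_on_def link_def insert_ident)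
  have "A = deletion j A \<union> insert j ` link j A"
    by (auto simp: image_insert_link deletion_def)
  then have "cube_measure (insert j G) p A = sum ?w (deletion j A \<union> insert j ` link j A)"
    unfolding cube_measure_def by (rule arg_cong[where f = "sum ?w"])
  also have "\<dots> = sum ?w (deletion j A) + sum ?w (insert j ` link j A)"
    using fin by (intro sum.union_disjoint) (auto simp: deletion_def)
  also have "\<dots> = sum ?w (deletion j A) + sum (?w \<circ> insert j) (link j A)"
    by (simp add: sum.reindex[OF inj])
  also have "\<dots> = (\<Sum>x\<in>deletion j A. (1 - p j) * cube_weight G p x) + (\<Sum>y\<in>link j A. p j * cube_weight G p y)"
    using sections_subset_Pow[OF assms(3,2)] assms(1,2)
    by (intro arg_cong2[where f = "(+)"] sum.cong) (auto simp: cube_weight_insert)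
  finally show ?thesis by (simp add: cube_measure_def sum_distrib_left)
qed

lemma sections_star_on:
  assumes "j \<notin> G" and "l \<in> G"
  shows "deletion j (star_on (insert j G) l) = star_on G l"
    and "link j (star_on (insert j G) l) = star_on G l"
  using assms by (auto simp: deletion_def link_def star_on_def)

lemma sections_star_on_self:
  assumes "j \<notin> G"
  shows "deletion j (star_on (insert j G) j) = {}" and "link j (star_on (insert j G) j) = Pow G"
  using assms by (auto simp: deletion_def link_def star_on_def)

lemma star_on_inj:
  assumes "l \<in> G" and "star_on G l = star_on G l'"
  shows "l = l'"
proof -
  have "{l} \<in> star_on G l" using assms(1) by (simp add: star_on_def)
  then have "{l} \<in> star_on G l'" by (simp only: assms(2))
  then show ?thesis by (auto simp: star_on_def)
qed

lemma cube_measure_star_on: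
  assumes "finite G" and "l \<in> G"
  shows "cube_measure G p (star_on G l) = p l"
proof -
  have G: "G = insert l (G - {l})" using assms(2) by auto
  have "star_on G l \<subseteq> Pow (insert l (G - {l}))" by (auto simp: star_on_def)
  then show ?thesis
    using cube_measure_insert[of "G - {l}" l "star_on G l" p] sections_star_on_self[of l "G - {l}"]
      cube_measure_Pow[of "G - {l}" p] assms(1) G
    by (simp add: cube_measure_def)
qed

lemma star_on_insert_of_sections_stars:
  assumes "j \<notin> G"
    and "\<exists>l\<in>G. p1 l * p2 l = P \<and> deletion j A = star_on G l \<and> deletion j B = star_on G l"
    and "\<exists>l\<in>G. p1 l * p2 l = P \<and> link j A = star_on G l \<and> deletion j B = star_on G l"
    and "\<exists>l\<in>G. p1 l * p2 l = P \<and> deletion j A = star_on G l \<and> link j B = star_on G l"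
  shows "\<exists>l\<in>insert j G. p1 l * p2 l = P \<and> A = star_on (insert j G) l \<and> B = star_on (insert j G) l"
proof -
  obtain l where l: "l \<in> G" "p1 l * p2 l = P" "deletion j A = star_on G l" "deletion j B = star_on G l"
    using assms(2) by blast
  obtain l' l'' where "link j A = star_on G l'" "star_on G l = star_on G l'"
    and "link j B = star_on G l''" "star_on G l = star_on G l''"
    using assms(3,4) l(3,4) by metis
  then have "link j A = star_on G l" "link j B = star_on G l" using star_on_inj[OF l(1)] by auto
  with l have "A = star_on (insert j G) l" "B = star_on (insert j G) l"
    by (simp_all add: sections_eq_imp_eq[of j] sections_star_on[OF assms(1) l(1)])
  then show ?thesis using l(1,2) by blast
qed

lemma star_on_insert_self_of_cube_measure_sections:
  assumes "finite G" and "j \<notin> G" and "\<forall>l\<in>G. 0 < p l \<and> p l < 1" and "A \<subseteq> Pow (insert j G)"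
    and "cube_measure G p (deletion j A) = 0" and "cube_measure G p (link j A) = 1"
  shows "A = star_on (insert j G) j"
proof (rule sections_eq_imp_eq[of j])
  note sections = sections_subset_Pow[OF assms(4,2)]
  show "deletion j A = deletion j (star_on (insert j G) j)"
    using cube_measure_eq_0_iff[OF assms(1,3) sections(1)] assms(2,5) by (simp add: sections_star_on_self)
  show "link j A = link j (star_on (insert j G) j)"
    using cube_measure_eq_1_iff[OF assms(1,3) sections(2)] assms(2,6) by (simp add: sections_star_on_self)
qed

section \<open>Cross-intersecting families\<close>

lemma cross_intersecting_commute: "cross_intersecting A B \<longleftrightarrow> cross_intersecting B A"
  by (auto simp: cross_intersecting_def)

lemma cross_intersecting_deletion_link:
  assumes "cross_intersecting A B"
  shows "cross_intersecting (deletion j A) (link j B)"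
  unfolding cross_intersecting_def
proof (intro ballI)
  fix x y assume "x \<in> deletion j A" "y \<in> link j B"
  then have "x \<in> A" "insert j y \<in> B" "j \<notin> x" by (simp_all add: deletion_def link_def)
  then have "x \<inter> insert j y \<noteq> {}" using assms unfolding cross_intersecting_def by blast
  then show "x \<inter> y \<noteq> {}" using \<open>j \<notin> x\<close> by simp
qed

lemma cross_intersecting_sections:
  assumes "cross_intersecting A B"
  shows "cross_intersecting (deletion j A) (deletion j B)"
    and "cross_intersecting (deletion j A) (link j B)"
    and "cross_intersecting (link j A) (deletion j B)"
proof -
  show "cross_intersecting (deletion j A) (deletion j B)"
    using assms by (simp add: cross_intersecting_def deletion_def)
  show "cross_intersecting (deletion j A) (link j B)"
    using assms by (rule cross_intersecting_deletion_link)
  show "cross_intersecting (link j A) (deletion j B)"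
    using assms cross_intersecting_deletion_link cross_intersecting_commute by metis
qed

lemma cross_intersecting_cube_measure_bounds:
  fixes G :: "'a set" and p1 p2 :: "'a \<Rightarrow> real" and P :: real
  assumes "finite G" and P: "0 < P" "P < 4/9"
    and "\<forall>l\<in>G. 0 < p1 l \<and> p1 l \<le> 1/3 \<and> 0 < p2 l \<and> p2 l \<le> 1/3 \<and> p1 l * p2 l \<le> P"
    and "A \<subseteq> Pow G" and "B \<subseteq> Pow G" and "cross_intersecting A B"
  shows "cube_measure G p1 A * cube_measure G p2 B \<le> P
    \<and> cube_measure G p1 A * cube_measure G p2 B
        \<le> 9*P/4 * (1 - cube_measure G p1 A) * (1 - cube_measure G p2 B)
    \<and> (cube_measure G p1 A * cube_measure G p2 B = P \<longrightarrow>
        (\<exists>l\<in>G. p1 l * p2 l = P \<and> A = star_on G l \<and> B = star_on G l))"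
  using assms(1,4-7)
proof (induction G arbitrary: A B rule: finite_induct)
  case empty
  then have "A = {} \<or> B = {}" by (auto simp: cross_intersecting_def)
  moreover have "cube_measure {} p1 A \<le> 1" "cube_measure {} p2 B \<le> 1"
    using empty by (simp_all add: cube_measure_le_one)
  ultimately show ?case using P by (auto simp: cube_measure_def)
next
  case (insert j G)
  then have p: "\<forall>l\<in>G. 0 < p1 l \<and> p1 l \<le> 1/3 \<and> 0 < p2 l \<and> p2 l \<le> 1/3 \<and> p1 l * p2 l \<le> P"
    and pj: "0 < p1 j" "p1 j \<le> 1/3" "0 < p2 j" "p2 j \<le> 1/3" "p1 j * p2 j \<le> P"
    by simp_all
  have prob: "\<forall>l\<in>G. 0 < p1 l \<and> p1 l < 1" "\<forall>l\<in>G. 0 < p2 l \<and> p2 l < 1" using p by auto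
  define a0 a1 b0 b1 where "a0 = cube_measure G p1 (deletion j A)" and "a1 = cube_measure G p1 (link j A)"
    and "b0 = cube_measure G p2 (deletion j B)" and "b1 = cube_measure G p2 (link j B)"
  note A = sections_subset_Pow[OF insert.prems(2) insert.hyps(2)]
  note B = sections_subset_Pow[OF insert.prems(3) insert.hyps(2)]
  note cross = cross_intersecting_sections[OF insert.prems(4), of j]
  note IH00 = insert.IH[OF p A(1) B(1) cross(1)] and IH01 = insert.IH[OF p A(1) B(2) cross(2)]
    and IH10 = insert.IH[OF p A(2) B(1) cross(3)]
  have a: "0 \<le> a0" "a0 \<le> 1" "0 \<le> a1" "a1 \<le> 1" and b: "0 \<le> b0" "b0 \<le> 1" "0 \<le> b1" "b1 \<le> 1"
    unfolding a0_def a1_def b0_def b1_def using A B prob insert.hyps(1)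
    by (simp_all add: cube_measure_nonneg cube_measure_le_one)
  define a b where "a = (1 - p1 j)*a0 + p1 j*a1" and "b = (1 - p2 j)*b0 + p2 j*b1"
  have hyperbola: "a*b \<le> 9*P/4 * (1 - a) * (1 - b)"
    using mix_below_hyperbola[of "p1 j" "p2 j" "9*P/4" a0 a1 b0 b1] mult_le_hyperbola_of_le_third[of "p1 j" "p2 j" P]
      pj P a b IH00 IH01 IH10
    by (simp add: a_def b_def a0_def a1_def b0_def b1_def)
  have bound: "a*b \<le> P"
    and eq_cases: "a*b = P \<Longrightarrow> (a0 = a1 \<and> b0 = b1) \<or> (a0 = 0 \<and> b0 = 0 \<and> a1 = 1 \<and> b1 = 1 \<and> p1 j * p2 j = P)"
    using mix_product_le[OF pj(1-5), of "9*P/4" a0 a1 b0 b1] P a b IH00 IH01 IH10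
    by (simp_all add: a_def b_def a0_def a1_def b0_def b1_def)
  have "\<exists>l\<in>insert j G. p1 l * p2 l = P \<and> A = star_on (insert j G) l \<and> B = star_on (insert j G) l"
    if ab: "a*b = P"
  proof -
    consider (flat) "a0 = a1" "b0 = b1" | (corner) "a0 = 0" "b0 = 0" "a1 = 1" "b1 = 1" "p1 j * p2 j = P"
      using eq_cases[OF ab] by blast
    then show ?thesis
    proof cases
      case flat
      then have "a0*b0 = P" "a0*b1 = P" "a1*b0 = P" using ab by (simp_all add: a_def b_def algebra_simps)
      with IH00 IH01 IH10 show ?thesis
        unfolding a0_def a1_def b0_def b1_def
        by (intro star_on_insert_of_sections_stars[OF insert.hyps(2)]) simp_all
    next
      case corner
      then have "A = star_on (insert j G) j" "B = star_on (insert j G) j"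
        using star_on_insert_self_of_cube_measure_sections[OF insert.hyps prob(1) insert.prems(2)]
          star_on_insert_self_of_cube_measure_sections[OF insert.hyps prob(2) insert.prems(3)]
        by (simp_all add: a0_def a1_def b0_def b1_def)
      then show ?thesis using corner(5) by blast
    qed
  qed
  moreover have "cube_measure (insert j G) p1 A = a" and "cube_measure (insert j G) p2 B = b"
    using cube_measure_insert insert.hyps insert.prems by (simp_all add: a_def b_def a0_def a1_def b0_def b1_def)
  ultimately show ?case using bound hyperbola by simp
qed

theorem theorem3:
  fixes n :: nat and p1 p2 :: "nat \<Rightarrow> real" and U1 U2 :: "nat set set"
  assumes "n \<ge> 1"
    and "prob_vec n p1" and "prob_vec n p2"
    and "p1 1 * p2 1 = Max ((\<lambda>l. p1 l * p2 l) ` {1..n})"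
    and "\<forall>l\<in>{1..n}. p1 l \<le> 1/3 \<and> p2 l \<le> 1/3"
    and "U1 \<subseteq> Pow {1..n}" and "U2 \<subseteq> Pow {1..n}"
    and "cross_intersecting U1 U2"
  shows "prod_measure n p1 U1 * prod_measure n p2 U2 \<le> p1 1 * p2 1
     \<and> (prod_measure n p1 U1 * prod_measure n p2 U2 = p1 1 * p2 1 \<longleftrightarrow>
        (\<exists>l\<in>{l\<in>{1..n}. p1 l * p2 l = p1 1 * p2 1}. U1 = star n l \<and> U2 = star n l))"
proof -
  define P where "P = p1 1 * p2 1"
  have measure: "prod_measure n p U = cube_measure {1..n} p U" for p U
    by (simp add: prod_measure_def cube_measure_def cube_weight_def)
  have star: "star n l = star_on {1..n} l" for l by (simp add: star_def star_on_def)
  have p: "\<forall>l\<in>{1..n}. 0 < p1 l \<and> p1 l \<le> 1/3 \<and> 0 < p2 l \<and> p2 l \<le> 1/3 \<and> p1 l * p2 l \<le> P"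
    using assms(2-5) by (auto simp: prob_vec_def P_def)
  have "1 \<in> {1..n}" using assms(1) by simp
  then have p11: "0 < p1 1" "p1 1 \<le> 1/3" "0 < p2 1" "p2 1 \<le> 1/3" using p by auto
  then have "0 < P" "P \<le> (1/3)*(1/3)" unfolding P_def by (simp, intro mult_mono) auto
  note bounds = cross_intersecting_cube_measure_bounds[OF finite_atLeastAtMost \<open>0 < P\<close> _ p assms(6-8)]
  show ?thesis
  proof (intro conjI iffI)
    show "prod_measure n p1 U1 * prod_measure n p2 U2 \<le> p1 1 * p2 1"
      using bounds \<open>P \<le> (1/3)*(1/3)\<close> by (simp add: measure P_def)
  next
    assume "prod_measure n p1 U1 * prod_measure n p2 U2 = p1 1 * p2 1"
    then show "\<exists>l\<in>{l\<in>{1..n}. p1 l * p2 l = p1 1 * p2 1}. U1 = star n l \<and> U2 = star n l"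
      using bounds \<open>P \<le> (1/3)*(1/3)\<close> by (auto simp: measure star P_def)
  next
    assume "\<exists>l\<in>{l\<in>{1..n}. p1 l * p2 l = p1 1 * p2 1}. U1 = star n l \<and> U2 = star n l"
    then show "prod_measure n p1 U1 * prod_measure n p2 U2 = p1 1 * p2 1"
      by (auto simp: measure star cube_measure_star_on)
  qed
qed

end
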